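(* Let $\mathbb{F}$ be an algebraically closed field of characteristic different from $2$. There is no finite-dimensional nilpotent Lie algebra $L$ over $\mathbb{F}$ with $\dim L^{2}=3$, $\dim Z(L)=1$ and $s(L)=5$ such that $L/Z(L)\cong L_{5,8}\oplus A(2)$.
   Context: Schur multiplier: if $L\cong F/R$ with $F$ a free Lie algebra, then $\mathcal{M}(L)\cong (R\cap F^{2})/[R,F]$. For a non-abelian nilpotent Lie algebra $L$ of dimension $n$, $s(L)\ge0$ is defined by $\dim\mathcal{M}(L)=\frac12(n-1)(n-2)+1-s(L)$. $A(2)$ is the $2$-dimensional abelian Lie algebra. $L_{5,8}$ has basis $x_1,\dots,x_5$ with nonzero brackets $[x_1,x_2]=x_4$, $[x_1,x_3]=x_5$. *)

theory Defs
  imports "HOL-Library.Function_Algebras" "HOL-Computational_Algebra.Polynomial"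
begin

text \<open>Vectors are functions from an index type to the field; addition, zero and
  negation are pointwise (Function_Algebras); scalar multiplication is sc.\<close>

definition sc :: "'a::field \<Rightarrow> ('i \<Rightarrow> 'a) \<Rightarrow> ('i \<Rightarrow> 'a)" where
  "sc c x = (\<lambda>i. c * x i)"

definition ev :: "'i \<Rightarrow> ('i \<Rightarrow> 'a::field)" where
  "ev k = (\<lambda>i. if i = k then 1 else 0)"

definition span_of :: "('i \<Rightarrow> 'a::field) set \<Rightarrow> ('i \<Rightarrow> 'a) set" where
  "span_of S = {v. \<exists>T u. finite T \<and> T \<subseteq> S \<and> v = (\<Sum>x\<in>T. sc (u x) x)}"

definition indep_mod :: "('i \<Rightarrow> 'a::field) set \<Rightarrow> ('i \<Rightarrow> 'a) set \<Rightarrow> bool" where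
  "indep_mod W B \<longleftrightarrow> (\<forall>T u. finite T \<longrightarrow> T \<subseteq> B \<longrightarrow>
      (\<Sum>x\<in>T. sc (u x) x) \<in> span_of W \<longrightarrow> (\<forall>x\<in>T. u x = 0))"

text \<open>The quotient space U/W (W a subspace of the subspace U) has dimension d:
  there are d elements of U forming a basis of U modulo W.\<close>
definition has_quot_dim :: "('i \<Rightarrow> 'a::field) set \<Rightarrow> ('i \<Rightarrow> 'a) set \<Rightarrow> nat \<Rightarrow> bool" where
  "has_quot_dim U W d \<longleftrightarrow> (\<exists>B. finite B \<and> card B = d \<and> B \<subseteq> U \<and> indep_mod W B \<and>
      U \<subseteq> span_of (B \<union> W))"

definition has_dim :: "('i \<Rightarrow> 'a::field) set \<Rightarrow> nat \<Rightarrow> bool" where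
  "has_dim U d \<longleftrightarrow> has_quot_dim U {} d"

definition lie_algebra :: "('i \<Rightarrow> 'a::field) set \<Rightarrow> (('i \<Rightarrow> 'a) \<Rightarrow> ('i \<Rightarrow> 'a) \<Rightarrow> ('i \<Rightarrow> 'a)) \<Rightarrow> bool" where
  "lie_algebra V br \<longleftrightarrow> span_of V = V \<and>
     (\<forall>x\<in>V. \<forall>y\<in>V. br x y \<in> V) \<and>
     (\<forall>x\<in>V. \<forall>y\<in>V. \<forall>z\<in>V. \<forall>a b.
         br (sc a x + sc b y) z = sc a (br x z) + sc b (br y z) \<and>
         br z (sc a x + sc b y) = sc a (br z x) + sc b (br z y)) \<and>
     (\<forall>x\<in>V. br x x = 0) \<and>
     (\<forall>x\<in>V. \<forall>y\<in>V. \<forall>z\<in>V. br x (br y z) + br y (br z x) + br z (br x y) = 0)"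

definition brk_span :: "(('i \<Rightarrow> 'a::field) \<Rightarrow> ('i \<Rightarrow> 'a) \<Rightarrow> ('i \<Rightarrow> 'a)) \<Rightarrow> ('i \<Rightarrow> 'a) set \<Rightarrow> ('i \<Rightarrow> 'a) set \<Rightarrow> ('i \<Rightarrow> 'a) set" where
  "brk_span br A B = span_of {br a b | a b. a \<in> A \<and> b \<in> B}"

definition center :: "('i \<Rightarrow> 'a::field) set \<Rightarrow> (('i \<Rightarrow> 'a) \<Rightarrow> ('i \<Rightarrow> 'a) \<Rightarrow> ('i \<Rightarrow> 'a)) \<Rightarrow> ('i \<Rightarrow> 'a) set" where
  "center V br = {z \<in> V. \<forall>x\<in>V. br z x = 0}"

text \<open>Lower central series L^1 = L, L^(k+1) = [L^k, L] (indexed from 0 here).\<close>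
primrec lcs :: "('i \<Rightarrow> 'a::field) set \<Rightarrow> (('i \<Rightarrow> 'a) \<Rightarrow> ('i \<Rightarrow> 'a) \<Rightarrow> ('i \<Rightarrow> 'a)) \<Rightarrow> nat \<Rightarrow> ('i \<Rightarrow> 'a) set" where
  "lcs V br 0 = V"
| "lcs V br (Suc k) = brk_span br (lcs V br k) V"

definition nilpotent_lie :: "('i \<Rightarrow> 'a::field) set \<Rightarrow> (('i \<Rightarrow> 'a) \<Rightarrow> ('i \<Rightarrow> 'a) \<Rightarrow> ('i \<Rightarrow> 'a)) \<Rightarrow> bool" where
  "nilpotent_lie V br \<longleftrightarrow> (\<exists>k. lcs V br k = {0})"

definition lie_hom :: "('i \<Rightarrow> 'a::field) set \<Rightarrow> (('i \<Rightarrow> 'a) \<Rightarrow> ('i \<Rightarrow> 'a) \<Rightarrow> ('i \<Rightarrow> 'a))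
    \<Rightarrow> ('j \<Rightarrow> 'a) set \<Rightarrow> (('j \<Rightarrow> 'a) \<Rightarrow> ('j \<Rightarrow> 'a) \<Rightarrow> ('j \<Rightarrow> 'a))
    \<Rightarrow> (('i \<Rightarrow> 'a) \<Rightarrow> ('j \<Rightarrow> 'a)) \<Rightarrow> bool" where
  "lie_hom V1 br1 V2 br2 \<phi> \<longleftrightarrow> (\<forall>x\<in>V1. \<phi> x \<in> V2) \<and>
     (\<forall>x\<in>V1. \<forall>y\<in>V1. \<forall>a b. \<phi> (sc a x + sc b y) = sc a (\<phi> x) + sc b (\<phi> y)) \<and>
     (\<forall>x\<in>V1. \<forall>y\<in>V1. \<phi> (br1 x y) = br2 (\<phi> x) (\<phi> y))"

text \<open>L/I is isomorphic to K (I an ideal of L): there is a surjective Lie homomorphism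
  L -> K with kernel exactly I (first isomorphism theorem).\<close>
definition quotient_iso :: "('i \<Rightarrow> 'a::field) set \<Rightarrow> (('i \<Rightarrow> 'a) \<Rightarrow> ('i \<Rightarrow> 'a) \<Rightarrow> ('i \<Rightarrow> 'a))
    \<Rightarrow> ('i \<Rightarrow> 'a) set \<Rightarrow> ('j \<Rightarrow> 'a) set \<Rightarrow> (('j \<Rightarrow> 'a) \<Rightarrow> ('j \<Rightarrow> 'a) \<Rightarrow> ('j \<Rightarrow> 'a)) \<Rightarrow> bool" where
  "quotient_iso V br I K brK \<longleftrightarrow> (\<exists>\<phi>. lie_hom V br K brK \<phi> \<and> \<phi> ` V = K \<and>
      {x \<in> V. \<phi> x = 0} = I)"

definition lie_sum_carrier :: "('i \<Rightarrow> 'a::field) set \<Rightarrow> ('j \<Rightarrow> 'a) set \<Rightarrow> ('i + 'j \<Rightarrow> 'a) set" where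
  "lie_sum_carrier V1 V2 = {f. (f \<circ> Inl) \<in> V1 \<and> (f \<circ> Inr) \<in> V2}"

definition lie_sum_br :: "(('i \<Rightarrow> 'a::field) \<Rightarrow> ('i \<Rightarrow> 'a) \<Rightarrow> ('i \<Rightarrow> 'a)) \<Rightarrow> (('j \<Rightarrow> 'a) \<Rightarrow> ('j \<Rightarrow> 'a) \<Rightarrow> ('j \<Rightarrow> 'a))
    \<Rightarrow> ('i + 'j \<Rightarrow> 'a) \<Rightarrow> ('i + 'j \<Rightarrow> 'a) \<Rightarrow> ('i + 'j \<Rightarrow> 'a)" where
  "lie_sum_br br1 br2 f g = (\<lambda>k. case k of
       Inl i \<Rightarrow> br1 (f \<circ> Inl) (g \<circ> Inl) i
     | Inr j \<Rightarrow> br2 (f \<circ> Inr) (g \<circ> Inr) j)"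

text \<open>L_{5,8}: basis x_1..x_5 = ev 1 .. ev 5, nonzero brackets [x1,x2]=x4, [x1,x3]=x5
  (bracket given by bilinear extension).\<close>
definition L58 :: "(nat \<Rightarrow> 'a::field) set" where
  "L58 = span_of {ev 1, ev 2, ev 3, ev 4, ev 5}"

definition L58_br :: "(nat \<Rightarrow> 'a::field) \<Rightarrow> (nat \<Rightarrow> 'a) \<Rightarrow> (nat \<Rightarrow> 'a)" where
  "L58_br x y = sc (x 1 * y 2 - x 2 * y 1) (ev 4) + sc (x 1 * y 3 - x 3 * y 1) (ev 5)"

definition A2 :: "(nat \<Rightarrow> 'a::field) set" where
  "A2 = span_of {ev 1, ev 2}"

definition A2_br :: "(nat \<Rightarrow> 'a::field) \<Rightarrow> (nat \<Rightarrow> 'a) \<Rightarrow> (nat \<Rightarrow> 'a)" where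
  "A2_br x y = 0"

text \<open>Free associative algebra on generators indexed by nat: noncommutative
  polynomials as coefficient functions on words. Product and commutator.\<close>
definition nc_mult :: "(nat list \<Rightarrow> 'a::field) \<Rightarrow> (nat list \<Rightarrow> 'a) \<Rightarrow> (nat list \<Rightarrow> 'a)" where
  "nc_mult p q = (\<lambda>w. \<Sum>k\<le>length w. p (take k w) * q (drop k w))"

definition nc_comm :: "(nat list \<Rightarrow> 'a::field) \<Rightarrow> (nat list \<Rightarrow> 'a) \<Rightarrow> (nat list \<Rightarrow> 'a)" where
  "nc_comm p q = nc_mult p q - nc_mult q p"

text \<open>The free Lie algebra on countably many generators x_i: the Lie subalgebra of the
  free associative algebra generated by the letters (Witt's construction).\<close>
inductive_set free_lie :: "(nat list \<Rightarrow> 'a::field) set" where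
  gen: "ev [i] \<in> free_lie"
| zero: "0 \<in> free_lie"
| add: "x \<in> free_lie \<Longrightarrow> y \<in> free_lie \<Longrightarrow> x + y \<in> free_lie"
| smult: "x \<in> free_lie \<Longrightarrow> sc c x \<in> free_lie"
| comm: "x \<in> free_lie \<Longrightarrow> y \<in> free_lie \<Longrightarrow> nc_comm x y \<in> free_lie"

text \<open>dim M(L) = d, via Hopf's formula M(L) = (R \<inter> F^2)/[R,F] for a free presentation
  L = F/R, where F is the free Lie algebra and R the kernel of the presentation.\<close>
definition schur_mult_dim :: "('i \<Rightarrow> 'a::field) set \<Rightarrow> (('i \<Rightarrow> 'a) \<Rightarrow> ('i \<Rightarrow> 'a) \<Rightarrow> ('i \<Rightarrow> 'a)) \<Rightarrow> nat \<Rightarrow> bool" where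
  "schur_mult_dim V br d \<longleftrightarrow> (\<exists>\<pi>. lie_hom free_lie nc_comm V br \<pi> \<and> \<pi> ` free_lie = V \<and>
     (let R = {p \<in> free_lie. \<pi> p = 0} in
      has_quot_dim (R \<inter> brk_span nc_comm free_lie free_lie) (brk_span nc_comm R free_lie) d))"

definition s_inv_eq :: "('i \<Rightarrow> 'a::field) set \<Rightarrow> (('i \<Rightarrow> 'a) \<Rightarrow> ('i \<Rightarrow> 'a) \<Rightarrow> ('i \<Rightarrow> 'a)) \<Rightarrow> int \<Rightarrow> bool" where
  "s_inv_eq V br s \<longleftrightarrow> (\<exists>n d. has_dim V n \<and> schur_mult_dim V br d \<and>
      int d = int ((n - 1) * (n - 2) div 2) + 1 - s)"

end

(*
  Since Z(L) is one-dimensional and L/Z(L) = L_{5,8} + A(2) is seven-dimensional, dim L >= 8,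
  so s(L) = 5 forces dim M(L) >= 21 + 1 - 5 = 17. On the other hand, for a free presentation
  L = F/R, Hopf's formula identifies M(L) with the kernel of F^2/[R,F] -> L^2, so that
  dim M(L) + dim L^2 <= dim F^2/[R,F]. Modulo [R,F], F^2 is spanned by the 28 brackets of lifts
  of a basis x1, ..., x5, y1, y2, z of L (z central, x4 = [x1,x2], x5 = [x1,x3]). The Jacobi
  identity modulo [R,F] expresses eight of them through the others, and since x4 is not central
  (and the characteristic is not 2) the brackets of the lift of z with the lifts of x1 and x2
  are linearly dependent modulo the rest. Hence dim F^2/[R,F] <= 19 and
  dim M(L) <= 19 - 3 = 16, a contradiction.
*)

theory Submission
  imports Defs
begin

section \<open>Coordinate vector spaces\<close>

interpretation vs: vector_space "sc :: 'a::field \<Rightarrow> ('i \<Rightarrow> 'a) \<Rightarrow> ('i \<Rightarrow> 'a)"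
  by unfold_locales (auto simp: sc_def fun_eq_iff algebra_simps)

lemma span_of_eq_span: "span_of S = vs.span S"
  unfolding span_of_def vs.span_explicit by auto

lemma span_of_empty: "span_of {} = {0}"
  by (simp add: span_of_eq_span)

lemma sc_simps [simp]:
  "sc 1 x = x" "sc 0 x = 0" "sc a 0 = 0" "sc a (sc b x) = sc (a * b) x" "sc (- 1) x = - x"
  by (auto simp: sc_def fun_eq_iff)

lemma sc_eq_zero_iff: "sc c x = 0 \<longleftrightarrow> c = 0 \<or> x = 0"
  by (auto simp: sc_def fun_eq_iff)

lemma ev_eq_iff [simp]: "(ev a :: 'i \<Rightarrow> 'a::field) = ev b \<longleftrightarrow> a = b"
proof
  assume "(ev a :: 'i \<Rightarrow> 'a) = ev b"
  then have "(ev a :: 'i \<Rightarrow> 'a) a = ev b a" by simp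
  then show "a = b" by (simp add: ev_def split: if_splits)
qed simp

lemma ev_nonzero [simp]: "(ev a :: 'i \<Rightarrow> 'a::field) \<noteq> 0" "0 \<noteq> (ev a :: 'i \<Rightarrow> 'a::field)"
proof -
  have "(ev a :: 'i \<Rightarrow> 'a) a \<noteq> 0" by (simp add: ev_def)
  then show "(ev a :: 'i \<Rightarrow> 'a::field) \<noteq> 0" "0 \<noteq> (ev a :: 'i \<Rightarrow> 'a::field)" by auto
qed

lemma span_cancel_scale:
  assumes "c \<noteq> 0" "sc c x + y \<in> vs.span A" "y \<in> vs.span A"
  shows "x \<in> vs.span A"
proof -
  have "sc (1 / c) ((sc c x + y) - y) \<in> vs.span A"
    using assms(2,3) by (intro vs.span_scale vs.span_diff)
  then show ?thesis using assms(1) by simp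
qed

lemma indep_mod_not_in_span:
  fixes W :: "('i \<Rightarrow> 'a::field) set"
  assumes "indep_mod W B" and "b \<in> B"
  shows "b \<notin> span_of W"
proof
  assume "b \<in> span_of W"
  then have "(\<Sum>x\<in>{b}. sc ((\<lambda>_. 1::'a) x) x) \<in> span_of W"
    by simp
  then have "\<forall>x\<in>{b}. (\<lambda>_. 1::'a) x = 0"
    using assms unfolding indep_mod_def by (auto dest!: spec[of _ "{b}"] spec[of _ "\<lambda>_. 1"])
  then show False
    by simp
qed

lemma indep_mod_nonzero: "indep_mod W B \<Longrightarrow> b \<in> B \<Longrightarrow> b \<noteq> 0"
  using indep_mod_not_in_span[of W B b] vs.span_zero[of W] by (auto simp: span_of_eq_span)

lemma finite_span_Un_subset:
  assumes "finite X" "X \<subseteq> vs.span (T \<union> W)"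
  obtains W' where "finite W'" "W' \<subseteq> W" "X \<subseteq> vs.span (T \<union> W')"
  using assms
proof (induction X arbitrary: thesis rule: finite_induct)
  case empty
  then show ?case by blast
next
  case (insert x Y)
  then obtain W1 where W1: "finite W1" "W1 \<subseteq> W" "Y \<subseteq> vs.span (T \<union> W1)" by auto
  have "x \<in> vs.span (T \<union> W)" using insert.prems by auto
  then obtain S u where S: "finite S" "S \<subseteq> T \<union> W" "x = (\<Sum>a\<in>S. sc (u a) a)"
    unfolding vs.span_explicit by auto
  have "x \<in> vs.span (T \<union> (W1 \<union> (S \<inter> W)))"
    unfolding S(3) by (intro vs.span_sum vs.span_scale vs.span_base) (use S in auto)
  moreover have "Y \<subseteq> vs.span (T \<union> (W1 \<union> (S \<inter> W)))"
    using W1(3) vs.span_mono[of "T \<union> W1" "T \<union> (W1 \<union> (S \<inter> W))"] by auto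
  ultimately show ?case
    using W1 S by (intro insert.prems(1)[of "W1 \<union> (S \<inter> W)"]) auto
qed

(* Extend X by a basis of the finitely many vectors of W that are needed, then use the exchange
   lemma. *)
lemma indep_mod_card_le:
  fixes X :: "('i \<Rightarrow> 'a::field) set"
  assumes fX: "finite X" and ind: "indep_mod W X" and fT: "finite T"
    and sub: "X \<subseteq> vs.span (T \<union> W)"
  shows "card X \<le> card T"
proof -
  obtain W' where W': "finite W'" "W' \<subseteq> W" "X \<subseteq> vs.span (T \<union> W')"
    using finite_span_Un_subset[OF fX sub] .
  obtain B where B: "B \<subseteq> W'" "vs.independent B" "W' \<subseteq> vs.span B"
    using vs.maximal_independent_subset by blast
  have fB: "finite B" using B W' finite_subset by blast
  have BW: "vs.span B \<subseteq> span_of W"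
    using B W' vs.span_mono unfolding span_of_eq_span by blast
  have disj: "X \<inter> B = {}"
    using indep_mod_not_in_span[OF ind] B(1) W'(2) vs.span_superset[of W]
    unfolding span_of_eq_span by blast
  have "\<not> vs.dependent (X \<union> B)"
  proof
    assume "vs.dependent (X \<union> B)"
    then obtain u where u: "\<exists>v\<in>X \<union> B. u v \<noteq> 0" "(\<Sum>v\<in>X \<union> B. sc (u v) v) = 0"
      using vs.dependent_finite[of "X \<union> B"] fX fB by auto
    have split: "(\<Sum>v\<in>X \<union> B. sc (u v) v) = (\<Sum>v\<in>X. sc (u v) v) + (\<Sum>v\<in>B. sc (u v) v)"
      using disj fX fB by (simp add: sum.union_disjoint)
    have "(\<Sum>v\<in>X. sc (u v) v) = - (\<Sum>v\<in>B. sc (u v) v)"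
      using u(2) split by (simp add: eq_neg_iff_add_eq_0)
    also have "\<dots> \<in> vs.span B"
      by (intro vs.span_neg vs.span_sum vs.span_scale vs.span_base) auto
    finally have "(\<Sum>v\<in>X. sc (u v) v) \<in> span_of W"
      using BW by blast
    then have uX: "\<forall>v\<in>X. u v = 0"
      using ind[unfolded indep_mod_def, rule_format, OF fX subset_refl] by blast
    then have "(\<Sum>v\<in>B. sc (u v) v) = 0" using u(2) split by simp
    then have "\<forall>v\<in>B. u v = 0" using B(2) fB vs.dependent_finite[of B] by auto
    with uX u(1) show False by auto
  qed
  moreover have "X \<union> B \<subseteq> vs.span (T \<union> B)"
  proof -
    have "T \<union> W' \<subseteq> vs.span (T \<union> B)"
      using B(3) vs.span_mono[of B "T \<union> B"] vs.span_superset[of "T \<union> B"] by auto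
    then have "vs.span (T \<union> W') \<subseteq> vs.span (T \<union> B)"
      using vs.span_minimal vs.subspace_span by blast
    then show ?thesis using W'(3) vs.span_superset[of "T \<union> B"] by auto
  qed
  ultimately have "card (X \<union> B) \<le> card (T \<union> B)"
    using vs.independent_span_bound[of "T \<union> B" "X \<union> B"] fT fB by auto
  also have "\<dots> \<le> card T + card B" by (rule card_Un_le)
  finally show ?thesis using card_Un_disjoint[OF fX fB disj] by linarith
qed

lemma has_dim_ge_card:
  assumes "has_dim U n" and "finite X" and "indep_mod {} X" and "X \<subseteq> U"
  shows "card X \<le> n"
proof -
  obtain B where B: "finite B" "card B = n" "U \<subseteq> span_of (B \<union> {})"
    using assms(1) unfolding has_dim_def has_quot_dim_def by blast
  have "X \<subseteq> vs.span (B \<union> {})"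
    using B(3) assms(4) by (simp add: span_of_eq_span)
  then show ?thesis
    using indep_mod_card_le[OF assms(2,3) B(1)] B(2) by simp
qed

lemma has_dim_one_obtain:
  assumes "has_dim U 1"
  obtains z where "z \<in> U" "z \<noteq> 0" "U \<subseteq> range (\<lambda>k. sc k z)"
proof -
  obtain B where B: "card B = 1" "B \<subseteq> U" "indep_mod {} B" "U \<subseteq> span_of (B \<union> {})"
    using assms unfolding has_dim_def has_quot_dim_def by blast
  then obtain z where z: "B = {z}" using card_1_singletonE by blast
  show thesis
  proof
    show "z \<in> U" "z \<noteq> 0" using B(2) indep_mod_nonzero[OF B(3)] z by auto
    show "U \<subseteq> range (\<lambda>k. sc k z)" using B(4) z by (simp add: span_of_eq_span vs.span_singleton)
  qed
qed

lemma span_coordinate_zero: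
  fixes g :: "'i \<Rightarrow> 'a::field"
  assumes "g \<in> vs.span S" and "\<forall>s\<in>S. s i = 0"
  shows "g i = 0"
proof -
  have "vs.subspace {h :: 'i \<Rightarrow> 'a. h i = 0}"
    by (auto simp: vs.subspace_def sc_def)
  moreover have "S \<subseteq> {h. h i = 0}"
    using assms(2) by auto
  ultimately have "vs.span S \<subseteq> {h. h i = 0}"
    using vs.span_minimal by blast
  then show ?thesis using assms(1) by auto
qed

section \<open>The free Lie algebra\<close>

lemma nc_mult_add_left: "nc_mult (p + q) r = nc_mult p r + nc_mult q r"
  by (auto simp: nc_mult_def fun_eq_iff algebra_simps sum.distrib)

lemma nc_mult_add_right: "nc_mult r (p + q) = nc_mult r p + nc_mult r q"
  by (auto simp: nc_mult_def fun_eq_iff algebra_simps sum.distrib)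

lemma nc_mult_sc_left: "nc_mult (sc c p) r = sc c (nc_mult p r)"
  by (auto simp: nc_mult_def fun_eq_iff sc_def sum_distrib_left algebra_simps)

lemma nc_mult_sc_right: "nc_mult r (sc c p) = sc c (nc_mult r p)"
  by (auto simp: nc_mult_def fun_eq_iff sc_def sum_distrib_left algebra_simps)

lemma nc_mult_diff_left: "nc_mult (p - q) r = nc_mult p r - nc_mult q r"
  by (auto simp: nc_mult_def fun_eq_iff algebra_simps sum_subtractf)

lemma nc_mult_diff_right: "nc_mult r (p - q) = nc_mult r p - nc_mult r q"
  by (auto simp: nc_mult_def fun_eq_iff algebra_simps sum_subtractf)

lemma nc_mult_assoc: "nc_mult (nc_mult p q) r = nc_mult p (nc_mult q r)"
proof (rule ext)
  fix w :: "nat list"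
  define n where "n = length w"
  let ?f = "\<lambda>k j. p (take j w) * q (take (k - j) (drop j w)) * r (drop k w)"
  have "nc_mult (nc_mult p q) r w = (\<Sum>k\<le>n. \<Sum>j\<le>k. ?f k j)"
    unfolding nc_mult_def n_def
    by (intro sum.cong refl) (auto simp: sum_distrib_right min_def take_drop)
  also have "\<dots> = (\<Sum>k\<in>{..n}. \<Sum>j\<in>{j. j \<in> {..n} \<and> j \<le> k}. ?f k j)"
    by (intro sum.cong refl) auto
  also have "\<dots> = (\<Sum>j\<in>{..n}. \<Sum>k\<in>{k. k \<in> {..n} \<and> j \<le> k}. ?f k j)"
    by (rule sum.swap_restrict) auto
  also have "\<dots> = (\<Sum>j\<le>n. \<Sum>k\<in>{j..n}. ?f k j)"
    by (intro sum.cong refl) auto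
  also have "\<dots> = (\<Sum>j\<le>n. \<Sum>m\<le>n-j. p (take j w) * q (take m (drop j w)) * r (drop (j + m) w))"
  proof (rule sum.cong[OF refl])
    fix j assume "j \<in> {..n}"
    then show "(\<Sum>k\<in>{j..n}. ?f k j) =
        (\<Sum>m\<le>n-j. p (take j w) * q (take m (drop j w)) * r (drop (j + m) w))"
      by (intro sum.reindex_bij_witness[where i="\<lambda>m. m + j" and j="\<lambda>k. k - j"]) auto
  qed
  also have "\<dots> = nc_mult p (nc_mult q r) w"
    unfolding nc_mult_def n_def
    by (intro sum.cong refl) (auto simp: sum_distrib_left algebra_simps add.commute)
  finally show "nc_mult (nc_mult p q) r w = nc_mult p (nc_mult q r) w" .
qed

lemma nc_comm_add_left: "nc_comm (p + q) r = nc_comm p r + nc_comm q r"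
  by (simp add: nc_comm_def nc_mult_add_left nc_mult_add_right)

lemma nc_comm_add_right: "nc_comm r (p + q) = nc_comm r p + nc_comm r q"
  by (simp add: nc_comm_def nc_mult_add_left nc_mult_add_right)

lemma nc_comm_sc_left: "nc_comm (sc c p) r = sc c (nc_comm p r)"
  by (simp add: nc_comm_def nc_mult_sc_left nc_mult_sc_right vs.scale_right_diff_distrib)

lemma nc_comm_sc_right: "nc_comm r (sc c p) = sc c (nc_comm r p)"
  by (simp add: nc_comm_def nc_mult_sc_left nc_mult_sc_right vs.scale_right_diff_distrib)

lemma nc_comm_diff_left: "nc_comm (p - q) r = nc_comm p r - nc_comm q r"
  by (simp add: nc_comm_def nc_mult_diff_left nc_mult_diff_right)

lemma nc_comm_diff_right: "nc_comm r (p - q) = nc_comm r p - nc_comm r q"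
  by (simp add: nc_comm_def nc_mult_diff_left nc_mult_diff_right)

lemma nc_comm_neg_left: "nc_comm (- p) r = - nc_comm p r"
  using nc_comm_sc_left[of "- 1" p r] by simp

lemma nc_comm_swap: "nc_comm q p = - nc_comm p q"
  by (simp add: nc_comm_def)

lemma nc_comm_self [simp]: "nc_comm p p = 0"
  by (simp add: nc_comm_def)

lemma nc_comm_zero [simp]: "nc_comm 0 p = 0" "nc_comm p 0 = 0"
  using nc_comm_sc_left[of 0 0 p] nc_comm_sc_right[of p 0 0] by simp_all

lemma nc_comm_jacobi:
  "nc_comm (nc_comm a b) c + nc_comm (nc_comm b c) a + nc_comm (nc_comm c a) b = 0"
  unfolding nc_comm_def nc_mult_diff_left nc_mult_diff_right nc_mult_assoc
  by (simp add: algebra_simps)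

lemma free_lie_subspace: "vs.subspace free_lie"
  unfolding vs.subspace_def by (auto intro: free_lie.intros)

lemma free_lie_closed [simp]:
  "0 \<in> free_lie"
  "x \<in> free_lie \<Longrightarrow> y \<in> free_lie \<Longrightarrow> x + y \<in> free_lie"
  "x \<in> free_lie \<Longrightarrow> y \<in> free_lie \<Longrightarrow> x - y \<in> free_lie"
  "x \<in> free_lie \<Longrightarrow> sc c x \<in> free_lie"
  "x \<in> free_lie \<Longrightarrow> y \<in> free_lie \<Longrightarrow> nc_comm x y \<in> free_lie"
  using free_lie_subspace vs.subspace_diff by (auto intro: free_lie.intros)

abbreviation free_lie_derived :: "(nat list \<Rightarrow> 'a::field) set" where
  "free_lie_derived \<equiv> brk_span nc_comm free_lie free_lie"

lemma free_lie_derived_subset: "free_lie_derived \<subseteq> free_lie"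
  unfolding brk_span_def span_of_eq_span
  by (rule vs.span_minimal[OF _ free_lie_subspace]) auto

locale lie_alg =
  fixes V :: "('i \<Rightarrow> 'a::field) set"
    and br :: "('i \<Rightarrow> 'a) \<Rightarrow> ('i \<Rightarrow> 'a) \<Rightarrow> ('i \<Rightarrow> 'a)"
  assumes lie: "lie_algebra V br"
begin

lemma subspace: "vs.subspace V"
  using lie unfolding lie_algebra_def span_of_eq_span by (metis vs.subspace_span)

lemma closed [simp]:
  "0 \<in> V"
  "x \<in> V \<Longrightarrow> y \<in> V \<Longrightarrow> x + y \<in> V"
  "x \<in> V \<Longrightarrow> y \<in> V \<Longrightarrow> x - y \<in> V"
  "x \<in> V \<Longrightarrow> - x \<in> V"
  "x \<in> V \<Longrightarrow> sc a x \<in> V"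
  "x \<in> V \<Longrightarrow> y \<in> V \<Longrightarrow> br x y \<in> V"
  using vs.subspace_0[OF subspace] vs.subspace_add[OF subspace] vs.subspace_diff[OF subspace]
    vs.subspace_neg[OF subspace] vs.subspace_scale[OF subspace] lie
  unfolding lie_algebra_def by auto

lemma br_bilinear:
  assumes "x \<in> V" "y \<in> V" "z \<in> V"
  shows "br (sc a x + sc b y) z = sc a (br x z) + sc b (br y z)"
    and "br z (sc a x + sc b y) = sc a (br z x) + sc b (br z y)"
  using lie assms unfolding lie_algebra_def by blast+

lemma br_add_left: "x \<in> V \<Longrightarrow> y \<in> V \<Longrightarrow> z \<in> V \<Longrightarrow> br (x + y) z = br x z + br y z"
  using br_bilinear(1)[of x y z 1 1] by simp

lemma br_add_right: "x \<in> V \<Longrightarrow> y \<in> V \<Longrightarrow> z \<in> V \<Longrightarrow> br z (x + y) = br z x + br z y"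
  using br_bilinear(2)[of x y z 1 1] by simp

lemma br_sc_left: "x \<in> V \<Longrightarrow> z \<in> V \<Longrightarrow> br (sc a x) z = sc a (br x z)"
  using br_bilinear(1)[of x x z a 0] by simp

lemma br_sc_right: "x \<in> V \<Longrightarrow> z \<in> V \<Longrightarrow> br z (sc a x) = sc a (br z x)"
  using br_bilinear(2)[of x x z a 0] by simp

lemma br_neg: "x \<in> V \<Longrightarrow> y \<in> V \<Longrightarrow> br (- x) y = - br x y"
  "x \<in> V \<Longrightarrow> y \<in> V \<Longrightarrow> br x (- y) = - br x y"
  using br_sc_left[of x y "- 1"] br_sc_right[of y x "- 1"] by simp_all

lemma br_self [simp]: "x \<in> V \<Longrightarrow> br x x = 0"
  using lie unfolding lie_algebra_def by blast

lemma br_zero [simp]: "x \<in> V \<Longrightarrow> br 0 x = 0" "x \<in> V \<Longrightarrow> br x 0 = 0"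
  using br_sc_left[of 0 x 0] br_sc_right[of 0 x 0] by simp_all

lemma br_swap: "x \<in> V \<Longrightarrow> y \<in> V \<Longrightarrow> br y x = - br x y"
proof -
  assume xy: "x \<in> V" "y \<in> V"
  have "0 = br (x + y) (x + y)" using xy by simp
  also have "\<dots> = br x x + br y x + (br x y + br y y)"
    using xy by (simp add: br_add_left br_add_right del: br_self)
  finally show ?thesis using xy by (simp add: eq_neg_iff_add_eq_0 add.commute)
qed

lemma br_jacobi:
  "x \<in> V \<Longrightarrow> y \<in> V \<Longrightarrow> z \<in> V \<Longrightarrow> br x (br y z) + br y (br z x) + br z (br x y) = 0"
  using lie unfolding lie_algebra_def by blast

end

lemma lie_alg_free_lie: "lie_alg free_lie nc_comm"
proof -
  have neg_sum: "C + A + B = 0 \<Longrightarrow> - A + - B + - C = 0" for A B C :: "nat list \<Rightarrow> 'a"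
    by (metis add.commute add.left_commute minus_add_distrib neg_equal_0_iff_equal)
  have "nc_comm x (nc_comm y z) + nc_comm y (nc_comm z x) + nc_comm z (nc_comm x y) = 0"
    for x y z :: "nat list \<Rightarrow> 'a"
    unfolding nc_comm_swap[of x "nc_comm y z"] nc_comm_swap[of y "nc_comm z x"]
      nc_comm_swap[of z "nc_comm x y"]
    by (rule neg_sum) (rule nc_comm_jacobi)
  then show ?thesis
    unfolding lie_alg_def lie_algebra_def span_of_eq_span vs.span_eq_iff[symmetric]
    using free_lie_subspace
    by (simp add: nc_comm_add_left nc_comm_add_right nc_comm_sc_left nc_comm_sc_right)
qed

locale lie_hom_on = source: lie_alg V1 br1
  for V1 :: "('i \<Rightarrow> 'a::field) set" and br1 +
  fixes V2 :: "('j \<Rightarrow> 'a) set" and br2 and f :: "('i \<Rightarrow> 'a) \<Rightarrow> ('j \<Rightarrow> 'a)"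
  assumes hom: "lie_hom V1 br1 V2 br2 f"
begin

lemma maps_to: "x \<in> V1 \<Longrightarrow> f x \<in> V2"
  using hom unfolding lie_hom_def by blast

lemma linear: "x \<in> V1 \<Longrightarrow> y \<in> V1 \<Longrightarrow> f (sc a x + sc b y) = sc a (f x) + sc b (f y)"
  using hom unfolding lie_hom_def by blast

lemma add: "x \<in> V1 \<Longrightarrow> y \<in> V1 \<Longrightarrow> f (x + y) = f x + f y"
  using linear[of x y 1 1] by simp

lemma scale: "x \<in> V1 \<Longrightarrow> f (sc a x) = sc a (f x)"
  using linear[of x x a 0] by simp

lemma zero [simp]: "f 0 = 0"
  using scale[of 0 0] by simp

lemma diff: "x \<in> V1 \<Longrightarrow> y \<in> V1 \<Longrightarrow> f (x - y) = f x - f y"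
  using linear[of x y 1 "- 1"] by simp

lemma bracket: "x \<in> V1 \<Longrightarrow> y \<in> V1 \<Longrightarrow> f (br1 x y) = br2 (f x) (f y)"
  using hom unfolding lie_hom_def by blast

lemma sum:
  "finite T \<Longrightarrow> g ` T \<subseteq> V1 \<Longrightarrow> f (\<Sum>x\<in>T. sc (u x) (g x)) = (\<Sum>x\<in>T. sc (u x) (f (g x)))"
proof (induction T rule: finite_induct)
  case (insert a T)
  have "(\<Sum>x\<in>T. sc (u x) (g x)) \<in> V1"
    using insert source.subspace by (intro vs.subspace_sum) auto
  then have "f (sc (u a) (g a) + (\<Sum>x\<in>T. sc (u x) (g x)))
      = sc (u a) (f (g a)) + f (\<Sum>x\<in>T. sc (u x) (g x))"
    using insert.prems by (simp add: add scale)
  moreover have "f (\<Sum>x\<in>T. sc (u x) (g x)) = (\<Sum>x\<in>T. sc (u x) (f (g x)))"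
    using insert.IH insert.prems by simp
  ultimately show ?case by (simp only: sum.insert[OF insert.hyps])
qed simp

lemma image_subspace:
  assumes U: "vs.subspace U" "U \<subseteq> V1"
  shows "vs.subspace (f ` U)"
  unfolding vs.subspace_def
proof (intro conjI ballI allI)
  show "0 \<in> f ` U"
    using vs.subspace_0[OF U(1)] by (intro image_eqI[of _ _ 0]) simp_all
next
  fix x y assume "x \<in> f ` U" "y \<in> f ` U"
  then obtain p q where pq: "p \<in> U" "q \<in> U" "x = f p" "y = f q" by auto
  moreover have "f (p + q) = f p + f q"
    using pq U(2) by (auto intro: add)
  ultimately show "x + y \<in> f ` U"
    using vs.subspace_add[OF U(1)] by (intro image_eqI[of _ _ "p + q"]) auto
next
  fix c x assume "x \<in> f ` U"
  then obtain p where p: "p \<in> U" "x = f p" by auto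
  moreover have "f (sc c p) = sc c (f p)"
    using p U(2) by (auto intro: scale)
  ultimately show "sc c x \<in> f ` U"
    using vs.subspace_scale[OF U(1)] by (intro image_eqI[of _ _ "sc c p"]) auto
qed

end

section \<open>Free presentations and the Schur multiplier\<close>

locale free_presentation = lie_alg V br + pi: lie_hom_on free_lie nc_comm V br \<pi>
  for V :: "('i \<Rightarrow> 'a::field) set" and br and \<pi> +
  assumes onto: "\<pi> ` free_lie = V"
begin

definition rels :: "(nat list \<Rightarrow> 'a) set" where
  "rels = {p \<in> free_lie. \<pi> p = 0}"

definition rels_comm :: "(nat list \<Rightarrow> 'a) set" where
  "rels_comm = brk_span nc_comm rels free_lie"

lemma rels_subspace: "vs.subspace rels"
  unfolding vs.subspace_def rels_def by (auto simp: pi.add pi.scale)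

lemma rels_comm_subspace: "vs.subspace rels_comm"
  unfolding rels_comm_def brk_span_def span_of_eq_span by (rule vs.subspace_span)

lemma rels_comm_subset_rels: "rels_comm \<subseteq> rels"
  unfolding rels_comm_def brk_span_def span_of_eq_span
  by (rule vs.span_minimal[OF _ rels_subspace]) (auto simp: rels_def pi.bracket pi.maps_to)

lemma comm_rel_left: "r \<in> rels \<Longrightarrow> a \<in> free_lie \<Longrightarrow> nc_comm r a \<in> rels_comm"
  unfolding rels_comm_def brk_span_def span_of_eq_span by (rule vs.span_base) auto

lemma comm_rel_right: "r \<in> rels \<Longrightarrow> a \<in> free_lie \<Longrightarrow> nc_comm a r \<in> rels_comm"
  using comm_rel_left vs.subspace_neg[OF rels_comm_subspace] nc_comm_swap by metis

lemma comm_congruent_left: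
  assumes "x \<in> free_lie" "y \<in> free_lie" "\<pi> x = \<pi> y" "a \<in> free_lie"
  shows "nc_comm x a - nc_comm y a \<in> rels_comm"
  using comm_rel_left[of "x - y" a] assms by (simp add: rels_def pi.diff nc_comm_diff_left)

lemma comm_congruent_right:
  assumes "x \<in> free_lie" "y \<in> free_lie" "\<pi> x = \<pi> y" "a \<in> free_lie"
  shows "nc_comm a x - nc_comm a y \<in> rels_comm"
  using comm_rel_right[of "x - y" a] assms by (simp add: rels_def pi.diff nc_comm_diff_right)

lemma jacobi_mod_rels_comm:
  assumes "a \<in> free_lie" "b \<in> free_lie" "c \<in> free_lie" "u \<in> free_lie" "v \<in> free_lie"
    and "\<pi> u = br (\<pi> b) (\<pi> c)" "\<pi> v = br (\<pi> c) (\<pi> a)"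
  shows "nc_comm (nc_comm a b) c + nc_comm u a + nc_comm v b \<in> rels_comm"
proof -
  have "nc_comm (nc_comm b c) a - nc_comm u a \<in> rels_comm"
    using assms by (intro comm_congruent_left) (auto simp: pi.bracket)
  moreover have "nc_comm (nc_comm c a) b - nc_comm v b \<in> rels_comm"
    using assms by (intro comm_congruent_left) (auto simp: pi.bracket)
  ultimately have "- ((nc_comm (nc_comm b c) a - nc_comm u a)
      + (nc_comm (nc_comm c a) b - nc_comm v b)) \<in> rels_comm"
    using rels_comm_subspace vs.subspace_add vs.subspace_neg by blast
  moreover have "A + B + C = 0 \<Longrightarrow> A + u' + v' = - ((B - u') + (C - v'))"
    for A B C u' v' :: "nat list \<Rightarrow> 'a"
    by (simp add: algebra_simps)
  ultimately show ?thesis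
    using nc_comm_jacobi[of a b c] by metis
qed

lemma ex_lift_if_closed:
  assumes "P 0"
    and "\<And>p q. p \<in> free_lie \<Longrightarrow> q \<in> free_lie \<Longrightarrow> P p \<Longrightarrow> P q \<Longrightarrow> P (p + q)"
    and "\<And>p a. p \<in> free_lie \<Longrightarrow> P p \<Longrightarrow> P (sc a p)"
    and "\<forall>g\<in>G. \<exists>p\<in>free_lie. \<pi> p = g \<and> P p"
    and "V \<subseteq> vs.span G" "x \<in> V"
  shows "\<exists>p\<in>free_lie. \<pi> p = x \<and> P p"
proof -
  let ?U = "{p \<in> free_lie. P p}"
  have "vs.subspace ?U"
    unfolding vs.subspace_def using assms(1-3) by auto
  then have "vs.subspace (\<pi> ` ?U)"
    by (rule pi.image_subspace) auto
  moreover have "G \<subseteq> \<pi> ` ?U"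
    using assms(4) by force
  ultimately have "V \<subseteq> \<pi> ` ?U"
    using assms(5) vs.span_minimal by blast
  then show ?thesis
    using assms(6) by auto
qed

lemma derived_subset_if_generator_brackets:
  assumes span: "V \<subseteq> vs.span G" and lifts: "G \<subseteq> \<pi> ` P" "P \<subseteq> free_lie"
    and S: "vs.subspace S" "rels_comm \<subseteq> S"
    and brackets: "\<forall>p\<in>P. \<forall>q\<in>P. nc_comm p q \<in> S"
  shows "free_lie_derived \<subseteq> S"
proof -
  have S_closed: "x \<in> S \<Longrightarrow> y \<in> S \<Longrightarrow> x + y \<in> S" "x \<in> S \<Longrightarrow> sc a x \<in> S" "0 \<in> S" for x y a
    using S(1) vs.subspace_add vs.subspace_scale vs.subspace_0 by blast+
  have lift_gens: "\<forall>g\<in>G. \<exists>p\<in>free_lie. \<pi> p = g \<and> Q p" if "\<And>p. p \<in> P \<Longrightarrow> Q p" for Q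
    using lifts that by blast
  have right: "nc_comm p q \<in> S" if p: "p \<in> P" and q: "q \<in> free_lie" for p q
  proof -
    obtain q0 where q0: "q0 \<in> free_lie" "\<pi> q0 = \<pi> q" "nc_comm p q0 \<in> S"
      using ex_lift_if_closed[where P="\<lambda>q. nc_comm p q \<in> S", OF _ _ _ _ span pi.maps_to[OF q]]
        lift_gens[of "\<lambda>q. nc_comm p q \<in> S"] brackets p
      by (auto simp: nc_comm_add_right nc_comm_sc_right S_closed)
    have "nc_comm p q - nc_comm p q0 \<in> S"
      using comm_congruent_right[of q q0 p] q q0 p lifts(2) S(2) by auto
    then show ?thesis
      using q0(3) S_closed(1) by fastforce
  qed
  have left: "nc_comm p q \<in> S" if p: "p \<in> free_lie" and q: "q \<in> free_lie" for p q
  proof -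
    obtain p0 where p0: "p0 \<in> free_lie" "\<pi> p0 = \<pi> p" "\<forall>q\<in>free_lie. nc_comm p0 q \<in> S"
      using ex_lift_if_closed[where P="\<lambda>p. \<forall>q\<in>free_lie. nc_comm p q \<in> S",
          OF _ _ _ _ span pi.maps_to[OF p]]
        lift_gens[of "\<lambda>p. \<forall>q\<in>free_lie. nc_comm p q \<in> S"] right
      by (auto simp: nc_comm_add_left nc_comm_sc_left S_closed)
    have "nc_comm p q - nc_comm p0 q \<in> S"
      using comm_congruent_left[of p p0 q] p q p0 S(2) by auto
    then show ?thesis
      using p0(3) q S_closed(1) by fastforce
  qed
  show ?thesis
    unfolding brk_span_def span_of_eq_span using left by (intro vs.span_minimal[OF _ S(1)]) auto
qed

lemma derived_subset_image: "brk_span br V V \<subseteq> \<pi> ` free_lie_derived"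
proof -
  have "vs.subspace free_lie_derived"
    unfolding brk_span_def span_of_eq_span by (rule vs.subspace_span)
  then have "vs.subspace (\<pi> ` free_lie_derived)"
    using free_lie_derived_subset by (rule pi.image_subspace)
  moreover have "{br a b |a b. a \<in> V \<and> b \<in> V} \<subseteq> \<pi> ` free_lie_derived"
  proof clarify
    fix a b assume "a \<in> V" "b \<in> V"
    obtain p q where "p \<in> free_lie" "q \<in> free_lie" "\<pi> p = a" "\<pi> q = b"
      using onto \<open>a \<in> V\<close> \<open>b \<in> V\<close> by blast
    then show "br a b \<in> \<pi> ` free_lie_derived"
      unfolding brk_span_def span_of_eq_span
      by (intro image_eqI[of _ _ "nc_comm p q"] vs.span_base) (auto simp: pi.bracket)
  qed
  ultimately show ?thesis
    unfolding brk_span_def[of br] span_of_eq_span by (rule vs.span_minimal[rotated])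
qed

lemma indep_mod_rels_comm_Un:
  assumes B: "B \<subseteq> rels" "indep_mod rels_comm B"
    and G: "G \<subseteq> free_lie" "inj_on \<pi> G" "indep_mod {} (\<pi> ` G)"
  shows "indep_mod rels_comm (B \<union> G)"
  unfolding indep_mod_def
proof (intro allI impI)
  fix S u
  assume S: "finite S" "S \<subseteq> B \<union> G" "(\<Sum>x\<in>S. sc (u x) x) \<in> span_of rels_comm"
  have "span_of rels_comm = rels_comm"
    unfolding span_of_eq_span using rels_comm_subspace by (rule vs.span_eq_iff[THEN iffD2])
  then have "0 = \<pi> (\<Sum>x\<in>S. sc (u x) x)"
    using S(3) rels_comm_subset_rels by (auto simp: rels_def)
  also have "\<dots> = (\<Sum>x\<in>S. sc (u x) (\<pi> x))"
    using pi.sum[OF S(1), of id u] S(2) B(1) G(1) by (auto simp: rels_def)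
  also have "\<dots> = (\<Sum>x\<in>S - B. sc (u x) (\<pi> x))"
    using S(1) B(1) by (intro sum.mono_neutral_right) (auto simp: rels_def)
  also have "\<dots> = (\<Sum>y\<in>\<pi> ` (S - B). sc (u (the_inv_into G \<pi> y)) y)"
  proof -
    have SB: "S - B \<subseteq> G" using S(2) by auto
    then show ?thesis
      using the_inv_into_f_f[OF G(2)]
      by (subst sum.reindex[OF inj_on_subset[OF G(2) SB]]) (auto intro!: sum.cong)
  qed
  finally have "(\<Sum>y\<in>\<pi> ` (S - B). sc (u (the_inv_into G \<pi> y)) y) \<in> span_of {}"
    by (simp add: span_of_empty)
  moreover have "\<pi> ` (S - B) \<subseteq> \<pi> ` G" using S(2) by auto
  ultimately have coeffs: "\<forall>y\<in>\<pi> ` (S - B). u (the_inv_into G \<pi> y) = 0"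
    using G(3)[unfolded indep_mod_def, rule_format, of "\<pi> ` (S - B)"
        "\<lambda>y. u (the_inv_into G \<pi> y)"] S(1) by simp
  have G0: "\<forall>x\<in>S - B. u x = 0"
  proof
    fix x assume x: "x \<in> S - B"
    then have "x \<in> G" using S(2) by auto
    then show "u x = 0"
      using bspec[OF coeffs imageI[OF x]] the_inv_into_f_f[OF G(2)] by simp
  qed
  then have "(\<Sum>x\<in>S \<inter> B. sc (u x) x) = (\<Sum>x\<in>S. sc (u x) x)"
    using S(1) by (intro sum.mono_neutral_left) auto
  then have "\<forall>x\<in>S \<inter> B. u x = 0"
    using B(2)[unfolded indep_mod_def, rule_format, of "S \<inter> B" u] S by auto
  with G0 show "\<forall>x\<in>S. u x = 0" by blast
qed

lemma double_comm_in_subspace: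
  assumes S: "vs.subspace S" "rels_comm \<subseteq> S"
    and free: "a \<in> free_lie" "b \<in> free_lie" "c \<in> free_lie" "u \<in> free_lie" "v \<in> free_lie"
    and "\<pi> u = br (\<pi> b) (\<pi> c)" "\<pi> v = br (\<pi> c) (\<pi> a)"
    and "nc_comm u a \<in> S" "nc_comm v b \<in> S"
  shows "nc_comm (nc_comm a b) c \<in> S"
proof -
  have "nc_comm (nc_comm a b) c + nc_comm u a + nc_comm v b \<in> S"
    using jacobi_mod_rels_comm[OF free assms(8,9)] S(2) by blast
  then have "nc_comm (nc_comm a b) c + nc_comm u a + nc_comm v b - nc_comm u a - nc_comm v b \<in> S"
    using assms(10,11) vs.subspace_diff[OF S(1)] by blast
  then show ?thesis by simp
qed

lemma ex_derived_lift:
  assumes "B \<subseteq> brk_span br V V"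
  obtains G where "G \<subseteq> free_lie_derived" "inj_on \<pi> G" "\<pi> ` G = B"
proof -
  have "\<forall>b\<in>B. \<exists>g. g \<in> free_lie_derived \<and> \<pi> g = b"
    using derived_subset_image assms by blast
  from bchoice[OF this] obtain lift
    where lift: "\<forall>b\<in>B. lift b \<in> free_lie_derived \<and> \<pi> (lift b) = b"
    by blast
  show thesis
  proof
    show "lift ` B \<subseteq> free_lie_derived" "\<pi> ` lift ` B = B"
      using lift by (auto simp: image_image)
    show "inj_on \<pi> (lift ` B)"
      by (rule inj_on_inverseI[of _ lift]) (auto simp: lift)
  qed
qed

(* Hopf's formula: M(L) = (R \<inter> F^2)/[R,F] is the kernel of F^2/[R,F] -> L^2. *)
lemma schur_mult_dim_bound:
  assumes T: "finite T" "free_lie_derived \<subseteq> vs.span (T \<union> rels_comm)"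
    and d: "has_quot_dim (rels \<inter> free_lie_derived) rels_comm d"
    and m: "has_dim (brk_span br V V) m"
  shows "d + m \<le> card T"
proof -
  obtain B where B: "finite B" "card B = d" "B \<subseteq> rels \<inter> free_lie_derived"
    "indep_mod rels_comm B"
    using d unfolding has_quot_dim_def by blast
  obtain B' where B': "finite B'" "card B' = m" "B' \<subseteq> brk_span br V V" "indep_mod {} B'"
    using m unfolding has_dim_def has_quot_dim_def by blast
  obtain G where G: "G \<subseteq> free_lie_derived" "inj_on \<pi> G" "\<pi> ` G = B'"
    using ex_derived_lift[OF B'(3)] .
  have finite_G: "finite G" and card_G: "card G = m"
    using G(2,3) B'(1,2) finite_image_iff card_image by fastforce+
  have "B \<inter> G = {}"
    using B(3) G(3) indep_mod_nonzero[OF B'(4)] by (auto simp: rels_def)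
  then have "card (B \<union> G) = d + m"
    using card_Un_disjoint B(1,2) finite_G card_G by metis
  moreover have "indep_mod rels_comm (B \<union> G)"
    using B(3,4) G free_lie_derived_subset B'(4) by (intro indep_mod_rels_comm_Un) auto
  moreover have "B \<union> G \<subseteq> vs.span (T \<union> rels_comm)"
    using B(3) G(1) T(2) by auto
  ultimately show ?thesis
    using indep_mod_card_le[OF _ _ T(1)] B(1) finite_G by (metis finite_UnI)
qed

end

abbreviation L58_A2 :: "(nat + nat \<Rightarrow> 'a::field) set" where
  "L58_A2 \<equiv> lie_sum_carrier L58 A2"

abbreviation L58_A2_br ::
    "(nat + nat \<Rightarrow> 'a::field) \<Rightarrow> (nat + nat \<Rightarrow> 'a) \<Rightarrow> (nat + nat \<Rightarrow> 'a)" where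
  "L58_A2_br \<equiv> lie_sum_br L58_br A2_br"

lemma L58_A2_br_apply:
  "L58_A2_br f g = (\<lambda>s. case s of
      Inl i \<Rightarrow> (f (Inl 1) * g (Inl 2) - f (Inl 2) * g (Inl 1)) * ev 4 i
             + (f (Inl 1) * g (Inl 3) - f (Inl 3) * g (Inl 1)) * ev 5 i
    | Inr j \<Rightarrow> 0)"
  by (auto simp: lie_sum_br_def L58_br_def A2_br_def sc_def fun_eq_iff split: sum.splits)

lemma L58_A2_br_eq_0:
  "f (Inl 1) = 0 \<Longrightarrow> g (Inl 1) = 0 \<Longrightarrow> L58_A2_br f g = 0"
  "f (Inl 2) = 0 \<Longrightarrow> f (Inl 3) = 0 \<Longrightarrow> g (Inl 2) = 0 \<Longrightarrow> g (Inl 3) = 0 \<Longrightarrow> L58_A2_br f g = 0"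
  by (simp_all add: L58_A2_br_apply fun_eq_iff split: sum.split)

lemma L58_A2_br_units:
  "L58_A2_br (ev (Inl 1)) (ev (Inl 2)) = ev (Inl 4)"
  "L58_A2_br (ev (Inl 1)) (ev (Inl 3)) = ev (Inl 5)"
  by (auto simp: L58_A2_br_apply ev_def fun_eq_iff split: sum.split)

lemma L58_A2_units:
  "k \<in> {1..5} \<Longrightarrow> ev (Inl k) \<in> L58_A2"
  "k \<in> {1, 2} \<Longrightarrow> ev (Inr k) \<in> L58_A2"
proof -
  have comp: "ev (Inl k) \<circ> Inl = ev k" "ev (Inl k) \<circ> Inr = 0"
    "ev (Inr k) \<circ> Inr = ev k" "ev (Inr k) \<circ> Inl = 0"
    by (auto simp: ev_def fun_eq_iff)
  have "k \<in> {1..5} \<Longrightarrow> k = 1 \<or> k = 2 \<or> k = 3 \<or> k = 4 \<or> k = 5"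
    by auto
  then have units: "k \<in> {1..5} \<Longrightarrow> ev k \<in> L58" "k \<in> {1, 2} \<Longrightarrow> ev k \<in> A2"
    unfolding L58_def A2_def span_of_eq_span by (auto intro: vs.span_base)
  have zero: "0 \<in> L58" "0 \<in> A2"
    unfolding L58_def A2_def span_of_eq_span by (auto intro: vs.span_zero)
  show "k \<in> {1..5} \<Longrightarrow> ev (Inl k) \<in> L58_A2" "k \<in> {1, 2} \<Longrightarrow> ev (Inr k) \<in> L58_A2"
    unfolding lie_sum_carrier_def mem_Collect_eq comp using units zero by simp_all
qed

lemma L58_A2_expand:
  assumes "f \<in> L58_A2"
  shows "f = sc (f (Inl 1)) (ev (Inl 1)) + sc (f (Inl 2)) (ev (Inl 2)) + sc (f (Inl 3)) (ev (Inl 3))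
    + sc (f (Inl 4)) (ev (Inl 4)) + sc (f (Inl 5)) (ev (Inl 5))
    + sc (f (Inr 1)) (ev (Inr 1)) + sc (f (Inr 2)) (ev (Inr 2))"
proof -
  have "f \<circ> Inl \<in> vs.span {ev 1, ev 2, ev 3, ev 4, ev 5}" "f \<circ> Inr \<in> vs.span {ev 1, ev 2}"
    using assms unfolding lie_sum_carrier_def L58_def A2_def span_of_eq_span by auto
  then have zero: "i \<notin> {1..5} \<Longrightarrow> f (Inl i) = 0" "j \<notin> {1, 2} \<Longrightarrow> f (Inr j) = 0"
    for i j
    using span_coordinate_zero[of "f \<circ> Inl" _ i] span_coordinate_zero[of "f \<circ> Inr" _ j]
    by (auto simp: ev_def)
  show ?thesis
  proof
    fix s show "f s = (sc (f (Inl 1)) (ev (Inl 1)) + sc (f (Inl 2)) (ev (Inl 2))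
      + sc (f (Inl 3)) (ev (Inl 3)) + sc (f (Inl 4)) (ev (Inl 4)) + sc (f (Inl 5)) (ev (Inl 5))
      + sc (f (Inr 1)) (ev (Inr 1)) + sc (f (Inr 2)) (ev (Inr 2))) s"
    proof (cases s)
      case (Inl i)
      then show ?thesis using zero(1)[of i]
        by (cases "i = 1"; cases "i = 2"; cases "i = 3"; cases "i = 4"; cases "i = 5")
          (auto simp: ev_def sc_def)
    next
      case (Inr j)
      then show ?thesis using zero(2)[of j]
        by (cases "j = 1"; cases "j = 2") (auto simp: ev_def sc_def)
    qed
  qed
qed

section \<open>Central extensions of L_{5,8} + A(2) by a one-dimensional centre\<close>

locale center_quotient_L58_A2 = lie_alg V br + phi: lie_hom_on V br L58_A2 L58_A2_br \<phi>
  for V :: "('i \<Rightarrow> 'a::field) set" and br and \<phi> +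
  assumes onto: "\<phi> ` V = L58_A2"
    and kernel: "{x \<in> V. \<phi> x = 0} = center V br"
    and center_dim: "has_dim (center V br) 1"
begin

definition z :: "'i \<Rightarrow> 'a" where
  "z = (SOME z. z \<in> center V br \<and> z \<noteq> 0 \<and> center V br \<subseteq> range (\<lambda>k. sc k z))"

lemma z: "z \<in> center V br" "z \<noteq> 0" "center V br \<subseteq> range (\<lambda>k. sc k z)"
proof -
  obtain z' where "z' \<in> center V br" "z' \<noteq> 0" "center V br \<subseteq> range (\<lambda>k. sc k z')"
    using has_dim_one_obtain[OF center_dim] .
  then have "\<exists>z. z \<in> center V br \<and> z \<noteq> 0 \<and> center V br \<subseteq> range (\<lambda>k. sc k z)"
    by blast
  from someI_ex[OF this] show "z \<in> center V br" "z \<noteq> 0" "center V br \<subseteq> range (\<lambda>k. sc k z)"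
    unfolding z_def by simp_all
qed

lemma z_in [simp]: "z \<in> V" and phi_z [simp]: "\<phi> z = 0"
  using z(1) kernel unfolding center_def by auto

lemma br_z [simp]: "x \<in> V \<Longrightarrow> br z x = 0" "x \<in> V \<Longrightarrow> br x z = 0"
  using z(1) br_swap[of z x] unfolding center_def by auto

lemma br_multiple_of_z:
  assumes "x \<in> V" "y \<in> V" "L58_A2_br (\<phi> x) (\<phi> y) = 0"
  shows "\<exists>s. br x y = sc s z"
proof -
  have "br x y \<in> center V br"
    using assms kernel phi.bracket[of x y] by auto
  then show ?thesis using z(3) by auto
qed

definition preimage :: "(nat + nat \<Rightarrow> 'a) \<Rightarrow> 'i \<Rightarrow> 'a" where
  "preimage k = (SOME x. x \<in> V \<and> \<phi> x = k)"

lemma preimage: "k \<in> L58_A2 \<Longrightarrow> preimage k \<in> V \<and> \<phi> (preimage k) = k"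
proof -
  assume "k \<in> L58_A2"
  from this[folded onto] have "\<exists>x. x \<in> V \<and> \<phi> x = k"
    by blast
  then show ?thesis
    unfolding preimage_def by (rule someI_ex)
qed

definition "x1 = preimage (ev (Inl 1))"
definition "x2 = preimage (ev (Inl 2))"
definition "x3 = preimage (ev (Inl 3))"
definition "x4 = br x1 x2"
definition "x5 = br x1 x3"
definition "y1 = preimage (ev (Inr 1))"
definition "y2 = preimage (ev (Inr 2))"

lemma preimage_basis:
  "x1 \<in> V \<and> \<phi> x1 = ev (Inl 1)" "x2 \<in> V \<and> \<phi> x2 = ev (Inl 2)" "x3 \<in> V \<and> \<phi> x3 = ev (Inl 3)"
  "y1 \<in> V \<and> \<phi> y1 = ev (Inr 1)" "y2 \<in> V \<and> \<phi> y2 = ev (Inr 2)"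
  unfolding x1_def x2_def x3_def y1_def y2_def
  by (simp_all add: preimage L58_A2_units)

lemma basis_in [simp]: "x1 \<in> V" "x2 \<in> V" "x3 \<in> V" "x4 \<in> V" "x5 \<in> V" "y1 \<in> V" "y2 \<in> V"
  using preimage_basis by (simp_all add: x4_def x5_def)

lemma phi_basis:
  "\<phi> x1 = ev (Inl 1)" "\<phi> x2 = ev (Inl 2)" "\<phi> x3 = ev (Inl 3)"
  "\<phi> x4 = ev (Inl 4)" "\<phi> x5 = ev (Inl 5)" "\<phi> y1 = ev (Inr 1)" "\<phi> y2 = ev (Inr 2)"
  using preimage_basis L58_A2_br_units
  by (simp_all add: x4_def x5_def phi.bracket)

definition "basis = {x1, x2, x3, x4, x5, y1, y2, z}"

lemma V_subset_span_basis: "V \<subseteq> vs.span basis"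
proof
  fix x assume x: "x \<in> V"
  let ?f = "\<phi> x"
  define w where "w = sc (?f (Inl 1)) x1 + sc (?f (Inl 2)) x2 + sc (?f (Inl 3)) x3
    + sc (?f (Inl 4)) x4 + sc (?f (Inl 5)) x5 + sc (?f (Inr 1)) y1 + sc (?f (Inr 2)) y2"
  have w: "w \<in> V"
    by (simp add: w_def)
  have w_span: "w \<in> vs.span basis"
    unfolding w_def basis_def by (intro vs.span_add vs.span_scale vs.span_base; simp)
  have "\<phi> w = ?f"
    using L58_A2_expand[OF phi.maps_to[OF x]]
    by (simp add: w_def phi.add phi.scale phi_basis)
  then have "x - w \<in> center V br"
    using kernel x w by (auto simp: phi.diff)
  then obtain k where "x - w = sc k z" using z(3) by auto
  then have "x = sc k z + w" by (simp add: algebra_simps)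
  also have "\<dots> \<in> vs.span basis"
    by (rule vs.span_add[OF vs.span_scale[OF vs.span_base] w_span]) (simp add: basis_def)
  finally show "x \<in> vs.span basis" .
qed

lemma basis_distinct: "distinct [x1, x2, x3, x4, x5, y1, y2, z]"
proof -
  have "distinct (map \<phi> [x1, x2, x3, x4, x5, y1, y2, z])"
    by (simp add: phi_basis)
  then show ?thesis by (simp only: distinct_map)
qed

lemma basis_indep: "indep_mod {} basis"
  unfolding indep_mod_def
proof (intro allI impI ballI)
  fix T u x assume T: "finite T" "T \<subseteq> basis" "(\<Sum>x\<in>T. sc (u x) x) \<in> span_of {}" and "x \<in> T"
  define c where "c x = (if x \<in> T then u x else 0)" for x
  have "0 = (\<Sum>x\<in>T. sc (u x) x)"
    using T(3) by (simp add: span_of_empty)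
  also have "\<dots> = (\<Sum>x\<in>basis. sc (c x) x)"
    using T by (intro sum.mono_neutral_cong_left) (auto simp: basis_def c_def)
  also have "\<dots> = sc (c x1) x1 + (sc (c x2) x2 + (sc (c x3) x3 + (sc (c x4) x4 + (sc (c x5) x5
      + (sc (c y1) y1 + (sc (c y2) y2 + sc (c z) z))))))"
    unfolding basis_def using sum.distinct_set_conv_list[OF basis_distinct] by simp
  finally have comb: "\<dots> = 0" ..
  then have "\<phi> (sc (c x1) x1 + (sc (c x2) x2 + (sc (c x3) x3 + (sc (c x4) x4 + (sc (c x5) x5
      + (sc (c y1) y1 + (sc (c y2) y2 + sc (c z) z))))))) = 0"
    by simp
  then have image: "sc (c x1) (ev (Inl 1)) + (sc (c x2) (ev (Inl 2)) + (sc (c x3) (ev (Inl 3))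
      + (sc (c x4) (ev (Inl 4)) + (sc (c x5) (ev (Inl 5)) + (sc (c y1) (ev (Inr 1))
      + sc (c y2) (ev (Inr 2))))))) = (0 :: nat + nat \<Rightarrow> 'a)"
    by (simp add: phi.add phi.scale phi_basis)
  have "c x1 = 0" "c x2 = 0" "c x3 = 0" "c x4 = 0" "c x5 = 0" "c y1 = 0" "c y2 = 0"
    using fun_cong[OF image, of "Inl 1"] fun_cong[OF image, of "Inl 2"]
      fun_cong[OF image, of "Inl 3"] fun_cong[OF image, of "Inl 4"]
      fun_cong[OF image, of "Inl 5"] fun_cong[OF image, of "Inr 1"]
      fun_cong[OF image, of "Inr 2"]
    by (simp_all add: ev_def sc_def)
  moreover from this have "c z = 0"
    using comb z(2) by (simp add: sc_eq_zero_iff)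
  ultimately show "u x = 0"
    using T(2) \<open>x \<in> T\<close> by (auto simp: basis_def c_def)
qed

lemma dim_ge_8: "has_dim V n \<Longrightarrow> 8 \<le> n"
  using has_dim_ge_card[of V n basis] basis_indep distinct_card[OF basis_distinct]
  by (simp add: basis_def)

lemma central_brackets:
  assumes "c \<in> {x4, x5, y1, y2, z}"
  shows "\<exists>s. br x2 c = sc s z" "\<exists>s. br x3 c = sc s z" "\<exists>s. br c x1 = sc s z"
proof -
  have c: "c \<in> V" "\<phi> c (Inl 1) = 0" "\<phi> c (Inl 2) = 0" "\<phi> c (Inl 3) = 0"
    using assms by (auto simp: phi_basis ev_def)
  show "\<exists>s. br x2 c = sc s z" "\<exists>s. br x3 c = sc s z"
    using br_multiple_of_z[of x2 c] br_multiple_of_z[of x3 c] c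
      L58_A2_br_eq_0(1)[of "\<phi> x2" "\<phi> c"] L58_A2_br_eq_0(1)[of "\<phi> x3" "\<phi> c"]
    by (simp_all add: phi_basis ev_def)
  show "\<exists>s. br c x1 = sc s z"
    using br_multiple_of_z[of c x1] c L58_A2_br_eq_0(2)[of "\<phi> c" "\<phi> x1"]
    by (simp add: phi_basis ev_def)
qed

lemma br_x2_x3_central: "\<exists>s. br x2 x3 = sc s z"
  using br_multiple_of_z[of x2 x3] L58_A2_br_eq_0(1)[of "\<phi> x2" "\<phi> x3"]
  by (simp add: phi_basis ev_def)

lemma br_x4_eq_0:
  assumes "c \<in> V" "br x2 c = sc s z" "br c x1 = sc t z"
  shows "br x4 c = 0"
proof -
  have "br x1 (br x2 c) + br x2 (br c x1) + br c (br x1 x2) = 0"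
    using assms by (intro br_jacobi) auto
  then have "br c x4 = 0"
    using assms by (simp add: br_sc_right x4_def)
  then show ?thesis using br_swap[of c x4] assms by simp
qed

lemma x4_not_central: "br x4 x1 \<noteq> 0 \<or> br x4 x2 \<noteq> 0 \<or> br x4 x3 \<noteq> 0"
proof (rule ccontr)
  assume "\<not> ?thesis"
  then have "br x4 c = 0" if "c \<in> {x1, x2, x3}" for c
    using that by auto
  moreover have "br x4 c = 0" if c: "c \<in> {x5, y1, y2}" for c
  proof -
    obtain s t where "br x2 c = sc s z" "br c x1 = sc t z"
      using central_brackets[of c] c by auto
    moreover have "c \<in> V" using c by auto
    ultimately show ?thesis by (intro br_x4_eq_0)
  qed
  ultimately have "basis \<subseteq> {c \<in> V. br x4 c = 0}"
    by (auto simp: basis_def)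
  moreover have "vs.subspace {c \<in> V. br x4 c = 0}"
    unfolding vs.subspace_def by (auto simp: br_add_right br_sc_right)
  ultimately have "V \<subseteq> {c \<in> V. br x4 c = 0}"
    using V_subset_span_basis vs.span_minimal by blast
  then have "x4 \<in> center V br"
    unfolding center_def by auto
  then have "\<phi> x4 = 0" using kernel by auto
  then show False by (simp add: phi_basis)
qed

lemma br_x2_x5_eq_br_x3_x4: "br x2 x5 = br x3 x4"
proof -
  obtain s where s: "br x2 x3 = sc s z"
    using br_x2_x3_central by blast
  have "br x1 (br x2 x3) + br x2 (br x3 x1) + br x3 (br x1 x2) = 0"
    by (intro br_jacobi) auto
  moreover have "br x3 x1 = - x5" using br_swap[of x1 x3] by (simp add: x5_def)
  ultimately have "- br x2 x5 + br x3 x4 = 0"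
    using s by (simp add: br_sc_right x4_def br_neg)
  then show ?thesis by (simp add: add.commute eq_neg_iff_add_eq_0[symmetric])
qed

end

section \<open>Counting brackets in a free presentation\<close>

locale L58_A2_presentation =
  center_quotient_L58_A2 V br \<phi> + free_presentation V br \<pi>
  for V :: "('i \<Rightarrow> 'a::field) set" and br \<phi> \<pi> +
  assumes char_not_2: "(2::'a) \<noteq> 0"
begin

definition lift :: "('i \<Rightarrow> 'a) \<Rightarrow> nat list \<Rightarrow> 'a" where
  "lift x = (SOME p. p \<in> free_lie \<and> \<pi> p = x)"

lemma lift: "x \<in> V \<Longrightarrow> lift x \<in> free_lie \<and> \<pi> (lift x) = x"
proof -
  assume "x \<in> V"
  from this[folded onto] have "\<exists>p. p \<in> free_lie \<and> \<pi> p = x"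
    by blast
  then show ?thesis
    unfolding lift_def by (rule someI_ex)
qed

(* Like x4 and x5 themselves, their lifts p4 and p5 are brackets, so that the Jacobi identity
   applies to them directly. *)
definition "p1 = lift x1"
definition "p2 = lift x2"
definition "p3 = lift x3"
definition "p4 = nc_comm p1 p2"
definition "p5 = nc_comm p1 p3"
definition "q1 = lift y1"
definition "q2 = lift y2"
definition "pz = lift z"

lemma lifts_in [simp]:
  "p1 \<in> free_lie" "p2 \<in> free_lie" "p3 \<in> free_lie" "p4 \<in> free_lie" "p5 \<in> free_lie"
  "q1 \<in> free_lie" "q2 \<in> free_lie" "pz \<in> free_lie"
  using lift[of x1] lift[of x2] lift[of x3] lift[of y1] lift[of y2] lift[of z]
  by (simp_all add: p1_def p2_def p3_def p4_def p5_def q1_def q2_def pz_def)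

lemma pi_lifts [simp]:
  "\<pi> p1 = x1" "\<pi> p2 = x2" "\<pi> p3 = x3" "\<pi> p4 = x4" "\<pi> p5 = x5"
  "\<pi> q1 = y1" "\<pi> q2 = y2" "\<pi> pz = z"
  using lift[of x1] lift[of x2] lift[of x3] lift[of y1] lift[of y2] lift[of z]
  by (simp_all add: p1_def p2_def p3_def p4_def p5_def q1_def q2_def pz_def x4_def x5_def
      pi.bracket)

(* The 28 brackets of the eight lifts, minus the eight eliminated by the Jacobi identity and
   minus nc_comm pz p1 and nc_comm pz p2. *)
definition "reduced_brackets = set [
    nc_comm p1 p2, nc_comm p1 p3, nc_comm p1 q1, nc_comm p1 q2, nc_comm p2 p3,
    nc_comm p2 q1, nc_comm p2 q2, nc_comm p3 q1, nc_comm p3 q2, nc_comm q1 q2,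
    nc_comm p4 p1, nc_comm p4 p2, nc_comm p5 p1, nc_comm p5 p2, nc_comm p5 p3,
    nc_comm pz p3, nc_comm pz q1, nc_comm pz q2]"

lemma finite_reduced_brackets: "finite reduced_brackets"
  unfolding reduced_brackets_def by simp

lemma card_reduced_brackets: "card reduced_brackets \<le> 18"
  unfolding reduced_brackets_def by (rule order_trans[OF card_length]) simp

lemma double_comm_central:
  assumes S: "vs.subspace S" "rels_comm \<subseteq> S"
    and free: "a \<in> free_lie" "b \<in> free_lie" "c \<in> free_lie"
    and "\<exists>s. br (\<pi> b) (\<pi> c) = sc s z" "\<exists>t. br (\<pi> c) (\<pi> a) = sc t z"
    and "nc_comm pz a \<in> S" "nc_comm pz b \<in> S"
  shows "nc_comm (nc_comm a b) c \<in> S"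
proof -
  obtain s t where "br (\<pi> b) (\<pi> c) = sc s z" "br (\<pi> c) (\<pi> a) = sc t z"
    using assms(6,7) by blast
  moreover have "nc_comm (sc s pz) a \<in> S" "nc_comm (sc t pz) b \<in> S"
    using assms(8,9) vs.subspace_scale[OF S(1)] by (simp_all add: nc_comm_sc_left)
  ultimately show ?thesis
    using free by (intro double_comm_in_subspace[OF S, of a b c "sc s pz" "sc t pz"])
      (simp_all add: pi.scale)
qed

lemma derived_subset_if_basic_brackets:
  assumes S: "vs.subspace S" "rels_comm \<subseteq> S"
    and basic: "reduced_brackets \<subseteq> S" "nc_comm pz p1 \<in> S" "nc_comm pz p2 \<in> S"
  shows "free_lie_derived \<subseteq> S"
proof -
  have reduced: "nc_comm p1 p2 \<in> S" "nc_comm p1 p3 \<in> S" "nc_comm p1 q1 \<in> S" "nc_comm p1 q2 \<in> S"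
    "nc_comm p2 p3 \<in> S" "nc_comm p2 q1 \<in> S" "nc_comm p2 q2 \<in> S" "nc_comm p3 q1 \<in> S"
    "nc_comm p3 q2 \<in> S" "nc_comm q1 q2 \<in> S" "nc_comm p4 p1 \<in> S" "nc_comm p4 p2 \<in> S"
    "nc_comm p5 p1 \<in> S" "nc_comm p5 p2 \<in> S" "nc_comm p5 p3 \<in> S" "nc_comm pz p3 \<in> S"
    "nc_comm pz q1 \<in> S" "nc_comm pz q2 \<in> S"
    using basic(1) unfolding reduced_brackets_def by auto
  have p4: "nc_comm p4 c \<in> S" if "c \<in> {p5, q1, q2, pz}" for c
    unfolding p4_def using that central_brackets[of "\<pi> c"] basic(2,3)
    by (intro double_comm_central[OF S]) auto
  have p5: "nc_comm p5 c \<in> S" if "c \<in> {q1, q2, pz}" for c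
    unfolding p5_def using that central_brackets[of "\<pi> c"] basic(2) reduced(16)
    by (intro double_comm_central[OF S]) auto
  have double: "nc_comm p4 p5 \<in> S" "nc_comm p4 q1 \<in> S" "nc_comm p4 q2 \<in> S" "nc_comm p4 pz \<in> S"
    "nc_comm p5 q1 \<in> S" "nc_comm p5 q2 \<in> S" "nc_comm p5 pz \<in> S"
    using p4 p5 by simp_all
  have p4_p3: "nc_comm p4 p3 \<in> S"
  proof -
    obtain s where s: "br x2 x3 = sc s z"
      using br_x2_x3_central by blast
    have "nc_comm (nc_comm p3 p1) p2 = - nc_comm p5 p2"
      unfolding p5_def by (simp add: nc_comm_swap[of p3 p1] nc_comm_neg_left)
    then have "nc_comm (nc_comm p3 p1) p2 \<in> S"
      using reduced(14) vs.subspace_neg[OF S(1)] by simp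
    moreover have "nc_comm (sc s pz) p1 \<in> S"
      using basic(2) vs.subspace_scale[OF S(1)] by (simp add: nc_comm_sc_left)
    ultimately show ?thesis
      unfolding p4_def using s
      by (intro double_comm_in_subspace[OF S, of p1 p2 p3 "sc s pz" "nc_comm p3 p1"])
        (simp_all add: pi.scale pi.bracket)
  qed
  have swap: "nc_comm q p \<in> S" if "nc_comm p q \<in> S" for p q
    using that vs.subspace_neg[OF S(1)] nc_comm_swap[of q p] by simp
  let ?P = "{p1, p2, p3, p4, p5, q1, q2, pz}"
  have all_pairs: "\<forall>p\<in>?P. \<forall>q\<in>?P. nc_comm p q \<in> S"
    using reduced basic(2,3) double p4_p3 vs.subspace_0[OF S(1)]
      reduced[THEN swap] basic(2,3)[THEN swap] double[THEN swap] p4_p3[THEN swap]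
    by auto
  have "basis \<subseteq> \<pi> ` ?P"
    by (auto simp: basis_def)
  then show ?thesis
    by (rule derived_subset_if_generator_brackets[OF V_subset_span_basis _ _ S all_pairs]) simp
qed

lemma jacobi_relation_p1_p2_p4:
  assumes "br x2 x4 = sc s24 z" "br x4 x1 = sc s41 z"
  shows "sc s24 (nc_comm pz p1) + sc s41 (nc_comm pz p2) \<in> rels_comm"
proof -
  have "nc_comm (nc_comm p1 p2) p4 + nc_comm (sc s24 pz) p1 + nc_comm (sc s41 pz) p2 \<in> rels_comm"
    using assms by (intro jacobi_mod_rels_comm) (simp_all add: pi.scale)
  then show ?thesis
    by (simp add: p4_def nc_comm_sc_left)
qed

(* The sum of the Jacobi relations for (p1, p2, p5) and (p1, p3, p4), in which nc_comm p4 p5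
   cancels against nc_comm p5 p4. *)
lemma jacobi_relation_p4_p5:
  assumes "br x3 x4 = sc s34 z" "br x4 x1 = sc s41 z" "br x5 x1 = sc s51 z"
  shows "sc (2 * s34) (nc_comm pz p1) + sc s51 (nc_comm pz p2) + sc s41 (nc_comm pz p3)
    \<in> rels_comm"
proof -
  have "nc_comm (nc_comm p1 p2) p5 + nc_comm (sc s34 pz) p1 + nc_comm (sc s51 pz) p2
      \<in> rels_comm"
    using assms br_x2_x5_eq_br_x3_x4 by (intro jacobi_mod_rels_comm) (simp_all add: pi.scale)
  then have A: "nc_comm p4 p5 + sc s34 (nc_comm pz p1) + sc s51 (nc_comm pz p2) \<in> rels_comm"
    by (simp only: p4_def nc_comm_sc_left)
  have "nc_comm (nc_comm p1 p3) p4 + nc_comm (sc s34 pz) p1 + nc_comm (sc s41 pz) p3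
      \<in> rels_comm"
    using assms by (intro jacobi_mod_rels_comm) (simp_all add: pi.scale)
  then have B: "nc_comm p5 p4 + sc s34 (nc_comm pz p1) + sc s41 (nc_comm pz p3) \<in> rels_comm"
    by (simp only: p5_def nc_comm_sc_left)
  have "(a + u + v) + (- a + u + w) = (u + u + v) + w" for a u v w :: "nat list \<Rightarrow> 'a"
    by (simp add: algebra_simps)
  moreover have "sc s34 x + sc s34 x = sc (2 * s34) x" for x :: "nat list \<Rightarrow> 'a"
    by (simp add: sc_def fun_eq_iff algebra_simps)
  ultimately show ?thesis
    using vs.subspace_add[OF rels_comm_subspace A B]
    by (simp add: nc_comm_swap[of p5 p4] add.assoc)
qed

lemma center_brackets_dependent:
  obtains c1 c2 where "c1 \<noteq> 0 \<or> c2 \<noteq> 0"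
    and "sc c1 (nc_comm pz p1) + sc c2 (nc_comm pz p2) \<in> vs.span (reduced_brackets \<union> rels_comm)"
proof -
  let ?R = "vs.span (reduced_brackets \<union> rels_comm)"
  have W: "rels_comm \<subseteq> ?R"
    using vs.span_superset[of "reduced_brackets \<union> rels_comm"] by auto
  obtain s24 s41 s34 s51 where s: "br x2 x4 = sc s24 z" "br x4 x1 = sc s41 z"
    "br x3 x4 = sc s34 z" "br x5 x1 = sc s51 z"
    using central_brackets[of x4] central_brackets(3)[of x5] by auto
  have "s24 \<noteq> 0 \<or> s41 \<noteq> 0 \<or> s34 \<noteq> 0"
    using x4_not_central s br_swap[of x2 x4] br_swap[of x3 x4] by auto
  then consider "s24 \<noteq> 0 \<or> s41 \<noteq> 0" | "s34 \<noteq> 0" by blast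
  then show thesis
  proof cases
    case 1
    then show thesis
      using that jacobi_relation_p1_p2_p4[OF s(1,2)] W by blast
  next
    case 2
    have "sc (2 * s34) (nc_comm pz p1) + sc s51 (nc_comm pz p2) + sc s41 (nc_comm pz p3) \<in> ?R"
      using jacobi_relation_p4_p5[OF s(3,2,4)] W by blast
    moreover have "sc s41 (nc_comm pz p3) \<in> ?R"
      by (intro vs.span_scale vs.span_base) (simp add: reduced_brackets_def)
    ultimately have "sc (2 * s34) (nc_comm pz p1) + sc s51 (nc_comm pz p2) \<in> ?R"
      using vs.span_diff by (metis add_diff_cancel)
    moreover have "2 * s34 \<noteq> 0" using 2 char_not_2 by simp
    ultimately show thesis by (intro that) auto
  qed
qed

lemma derived_subset_span_Un:
  assumes T: "reduced_brackets \<subseteq> T" "nc_comm pz p1 \<in> vs.span (T \<union> rels_comm)"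
    "nc_comm pz p2 \<in> vs.span (T \<union> rels_comm)"
  shows "free_lie_derived \<subseteq> vs.span (T \<union> rels_comm)"
proof (rule derived_subset_if_basic_brackets[OF vs.subspace_span _ _ T(2,3)])
  show "rels_comm \<subseteq> vs.span (T \<union> rels_comm)" "reduced_brackets \<subseteq> vs.span (T \<union> rels_comm)"
    using T(1) vs.span_superset[of "T \<union> rels_comm"] by blast+
qed

lemma derived_spanned_by_19:
  obtains T where "finite T" "card T \<le> 19" "free_lie_derived \<subseteq> vs.span (T \<union> rels_comm)"
proof -
  obtain c1 c2 where c: "c1 \<noteq> 0 \<or> c2 \<noteq> 0"
    and dep: "sc c1 (nc_comm pz p1) + sc c2 (nc_comm pz p2)
      \<in> vs.span (reduced_brackets \<union> rels_comm)"
    by (rule center_brackets_dependent)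
  define b where "b = (if c2 = 0 then nc_comm pz p2 else nc_comm pz p1)"
  let ?T = "insert b reduced_brackets"
  have dep': "sc c1 (nc_comm pz p1) + sc c2 (nc_comm pz p2) \<in> vs.span (?T \<union> rels_comm)"
    using dep vs.span_mono[of "reduced_brackets \<union> rels_comm" "?T \<union> rels_comm"] by blast
  have b: "b \<in> vs.span (?T \<union> rels_comm)"
    by (rule vs.span_base) simp
  have "nc_comm pz p1 \<in> vs.span (?T \<union> rels_comm) \<and> nc_comm pz p2 \<in> vs.span (?T \<union> rels_comm)"
  proof (cases "c2 = 0")
    case True
    then have "b = nc_comm pz p2" "c1 \<noteq> 0"
      using c by (simp_all add: b_def)
    moreover have "sc c1 (nc_comm pz p1) + 0 \<in> vs.span (?T \<union> rels_comm)"
      using dep' True by (simp only: sc_simps)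
    ultimately show ?thesis
      using b span_cancel_scale vs.span_zero by metis
  next
    case False
    then have "b = nc_comm pz p1"
      by (simp add: b_def)
    moreover have "sc c2 (nc_comm pz p2) + sc c1 (nc_comm pz p1) \<in> vs.span (?T \<union> rels_comm)"
      using dep' by (subst add.commute)
    ultimately show ?thesis
      using b False span_cancel_scale vs.span_scale by metis
  qed
  then have "free_lie_derived \<subseteq> vs.span (?T \<union> rels_comm)"
    by (intro derived_subset_span_Un) auto
  moreover have "card ?T \<le> 19"
    using card_insert_le_m1[of 19 reduced_brackets b] card_reduced_brackets by simp
  ultimately show thesis
    using finite_reduced_brackets by (intro that[of ?T]) auto
qed


lemma schur_mult_dim_le_16:
  assumes "has_quot_dim (rels \<inter> free_lie_derived) rels_comm d"
    and "has_dim (brk_span br V V) 3"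
  shows "d \<le> 16"
proof -
  obtain T where "finite T" "card T \<le> 19" "free_lie_derived \<subseteq> vs.span (T \<union> rels_comm)"
    by (rule derived_spanned_by_19)
  with schur_mult_dim_bound[OF _ _ assms] show ?thesis by fastforce
qed
end

theorem lemma2p9:
  fixes V :: "('i \<Rightarrow> 'a::field) set"
    and br :: "('i \<Rightarrow> 'a) \<Rightarrow> ('i \<Rightarrow> 'a) \<Rightarrow> ('i \<Rightarrow> 'a)"
  assumes alg_closed: "\<forall>p :: 'a poly. degree p \<ge> 1 \<longrightarrow> (\<exists>x. poly p x = 0)"
    and char_ne_2: "(2::'a) \<noteq> 0"
  shows "\<not> (lie_algebra V br \<and> (\<exists>n. has_dim V n) \<and> nilpotent_lie V br \<and>
             has_dim (brk_span br V V) 3 \<and> has_dim (center V br) 1 \<and> s_inv_eq V br 5 \<and>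
             quotient_iso V br (center V br)
               (lie_sum_carrier L58 A2) (lie_sum_br L58_br A2_br))"
proof
  assume "lie_algebra V br \<and> (\<exists>n. has_dim V n) \<and> nilpotent_lie V br \<and>
             has_dim (brk_span br V V) 3 \<and> has_dim (center V br) 1 \<and> s_inv_eq V br 5 \<and>
             quotient_iso V br (center V br)
               (lie_sum_carrier L58 A2) (lie_sum_br L58_br A2_br)"
  then have lie: "lie_algebra V br" and derived_dim: "has_dim (brk_span br V V) 3"
    and center_dim: "has_dim (center V br) 1" and "s_inv_eq V br 5"
    and "quotient_iso V br (center V br) L58_A2 L58_A2_br"
    by simp_all
  then obtain \<phi> where \<phi>: "lie_hom V br L58_A2 L58_A2_br \<phi>" "\<phi> ` V = L58_A2"
      "{x \<in> V. \<phi> x = 0} = center V br"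
    unfolding quotient_iso_def by blast
  obtain n d where n: "has_dim V n" and d: "schur_mult_dim V br d"
      and s: "int d = int ((n - 1) * (n - 2) div 2) + 1 - 5"
    using \<open>s_inv_eq V br 5\<close> unfolding s_inv_eq_def by blast
  from d obtain \<pi> where \<pi>: "lie_hom free_lie nc_comm V br \<pi>" "\<pi> ` free_lie = V"
      "has_quot_dim ({p \<in> free_lie. \<pi> p = 0} \<inter> free_lie_derived)
         (brk_span nc_comm {p \<in> free_lie. \<pi> p = 0} free_lie) d"
    unfolding schur_mult_dim_def Let_def by blast
  have "lie_alg V br"
    using lie by (simp add: lie_alg_def)
  then interpret L58_A2_presentation V br \<phi> \<pi>
    using lie_alg_free_lie \<phi> \<pi>(1,2) center_dim char_ne_2
    by (intro L58_A2_presentation.intro center_quotient_L58_A2.intro free_presentation.intro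
        lie_hom_on.intro lie_hom_on_axioms.intro center_quotient_L58_A2_axioms.intro
        free_presentation_axioms.intro L58_A2_presentation_axioms.intro)
  have "d \<le> 16"
    using schur_mult_dim_le_16 \<pi>(3) derived_dim unfolding rels_def rels_comm_def by blast
  moreover have "7 * 6 \<le> (n - 1) * (n - 2)"
    using dim_ge_8[OF n] by (intro mult_le_mono) auto
  ultimately show False
    using s by simp
qed

end
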